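(* Let $X\in\mathbf{R}$, $Y>0$, and let $f\colon(X,X+Y]\to\mathbf{R}$ be a real function. Let $d,H_1,\dots,H_d$ be natural numbers with $H_1+\cdots+H_d\le Y$. Then \[ \Bigl|\frac{1}{Y}\sum_{X<n\le X+Y}e(f(n))\Bigr|\le B\max\bigl(H_1^{-1/2},H_2^{-1/4},\dots,H_d^{-1/2^d},\,B^{-1/2^d}T_d^{1/2^d}\bigr), \] where $B=2+2\sqrt2$ and \[ T_d=\frac{1}{YH_1\cdots H_d}\sum_{\mathbf a}\Bigl|\sum_{n\in I(\mathbf a)}e(f_{\mathbf a}(n))\Bigr|, \] the outer sum running over all integer vectors $\mathbf a=(a_1,\dots,a_d)$ with $1\le a_r\le H_r-1$ for each $r$.
   Context: $e(x)=e^{2\pi i x}$; sums over $n$ are over integers. For real $a_1,\dots,a_h$ define inductively $f_{(a_1)}(x)=f(x+a_1)-f(x)$ and $f_{(a_1,\dots,a_h)}(x)=f_{(a_1,\dots,a_{h-1})}(x+a_h)-f_{(a_1,\dots,a_{h-1})}(x)$. For positive $a_j$, $f_{\mathbf a}$ is defined exactly on $I(\mathbf a)=(X,X+Y-\sum_j a_j]$ (possibly empty), and by convention $e(f_{\mathbf a}(x))=0$ when $f_{\mathbf a}(x)$ is undefined. *)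

theory Defs
  imports Complex_Main "HOL-Library.FuncSet"
begin

definition e :: "real \<Rightarrow> complex" where
  "e x = exp (2 * of_real pi * \<i> * of_real x)"

text \<open>Iterated differences: fdiff f a h is f_(a_1,...,a_h), with the shift
  vector a indexed from 1.  f_() = f, f_(a_1..a_h)(x) = f_(a_1..a_(h-1))(x+a_h) - f_(a_1..a_(h-1))(x).\<close>
fun fdiff :: "(real \<Rightarrow> real) \<Rightarrow> (nat \<Rightarrow> int) \<Rightarrow> nat \<Rightarrow> real \<Rightarrow> real" where
  "fdiff f a 0 x = f x"
| "fdiff f a (Suc h) x = fdiff f a h (x + of_int (a (Suc h))) - fdiff f a h x"

definition Iset :: "real \<Rightarrow> real \<Rightarrow> nat \<Rightarrow> (nat \<Rightarrow> int) \<Rightarrow> int set" where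
  "Iset X Y d a = {n::int. X < of_int n \<and> of_int n \<le> X + Y - of_int (\<Sum>j\<in>{1..d}. a j)}"

definition Bconst :: real where
  "Bconst = 2 + 2 * sqrt 2"

definition Td :: "(real \<Rightarrow> real) \<Rightarrow> real \<Rightarrow> real \<Rightarrow> nat \<Rightarrow> (nat \<Rightarrow> nat) \<Rightarrow> real" where
  "Td f X Y d H =
     (1 / (Y * (\<Prod>r\<in>{1..d}. real (H r)))) *
     (\<Sum>a\<in>Pi\<^sub>E {1..d} (\<lambda>r. {1..int (H r) - 1}).
        cmod (\<Sum>n\<in>Iset X Y d a. e (fdiff f a d (of_int n))))"

end

theory Submission
  imports Defs "HOL-Analysis.Complex_Transcendental"
begin

text \<open>
  Van der Corput's inequality: for an interval of length Y and 1 <= H <= Y,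
  |sum_n e(g n)|^2 <= 4 Y^2/H + (4 Y/H) sum_{0<a<H} |sum_n e(g(n+a) - g n)|.
  It follows by writing H times the sum of the N terms as the sum of the N + H - 1 window
  sums sum_{h<H} z(m+h) and applying Cauchy-Schwarz.
  Let A_k be the sum of |sum_{n in I(a)} e(f_a(n))| over the shift vectors (a_1,...,a_k),
  divided by Y H_1...H_k, so that A_0 is the left-hand side and A_d = T_d.  Applying the
  inequality to each inner sum with H = H_(k+1) and averaging with Cauchy-Schwarz gives
  A_k^2 <= 4/H_(k+1) + 4 A_(k+1).  With M the maximum on the right-hand side we have
  1/H_r <= M^(2^r) and A_d <= B M^(2^d); since B^2 = 4 + 4B, the bound A_k <= B M^(2^k)
  propagates from k = d down to k = 0.
\<close>

lemma norm_sum_squared_le: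
  fixes w :: "'a \<Rightarrow> complex"
  shows "(cmod (sum w M))\<^sup>2 \<le> real (card M) * (\<Sum>m\<in>M. (cmod (w m))\<^sup>2)"
proof -
  have "(cmod (sum w M))\<^sup>2 \<le> (\<Sum>m\<in>M. cmod (w m))\<^sup>2"
    by (simp add: norm_sum power_mono)
  also have "\<dots> \<le> (\<Sum>m\<in>M. (cmod (w m))\<^sup>2) * card M"
    by (rule sum_squared_le_sum_of_squares)
  finally show ?thesis by (simp add: mult.commute)
qed

lemma sum_greaterThanAtMost_int_shift:
  fixes g :: "int \<Rightarrow> 'a::comm_monoid_add"
  shows "(\<Sum>n\<in>{a<..b}. g (n + k)) = (\<Sum>n\<in>{a+k<..b+k}. g n)"
proof -
  have "(\<lambda>n. n + k) ` {a<..b} = {a+k<..b+k}"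
    using image_add_greaterThanAtMost[of k a b] by (simp add: add.commute)
  then show ?thesis
    by (metis (no_types, lifting) add_right_imp_eq inj_on_def sum.reindex_cong)
qed

lemma sum_greaterThanAtMost_support:
  fixes g :: "int \<Rightarrow> 'a::comm_monoid_add"
  assumes "\<And>n. n \<notin> {L<..U} \<Longrightarrow> g n = 0" and "L' \<le> L" and "U \<le> U'"
  shows "(\<Sum>n\<in>{L'<..U'}. g n) = (\<Sum>n\<in>{L<..U}. g n)"
  using assms by (intro sum.mono_neutral_right) auto

lemma sum_pair_differences_le:
  fixes c :: "int \<Rightarrow> real"
  assumes "\<And>k. c k \<ge> 0"
  shows "(\<Sum>h<H. \<Sum>h'<H. c (int h - int h')) \<le> H * (\<Sum>k\<in>{-int H<..<int H}. c k)"
proof -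
  have "(\<Sum>h<H. c (int h - int h')) \<le> (\<Sum>k\<in>{-int H<..<int H}. c k)" if "h' < H" for h'
  proof -
    have "(\<Sum>h<H. c (int h - int h')) = (\<Sum>k\<in>(\<lambda>h. int h - int h') ` {..<H}. c k)"
      by (subst sum.reindex) (auto simp: inj_on_def)
    also have "\<dots> \<le> (\<Sum>k\<in>{-int H<..<int H}. c k)"
      using that assms by (intro sum_mono2) auto
    finally show ?thesis .
  qed
  then have "(\<Sum>h'<H. \<Sum>h<H. c (int h - int h')) \<le> (\<Sum>h'<H. \<Sum>k\<in>{-int H<..<int H}. c k)"
    by (intro sum_mono) auto
  then show ?thesis by (subst sum.swap) simp
qed

lemma sum_symmetric_int_interval:
  fixes c :: "int \<Rightarrow> 'a::comm_semiring_1"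
  assumes "\<And>k. c (- k) = c k" and "m \<ge> 1"
  shows "(\<Sum>k\<in>{-m<..<m}. c k) = c 0 + 2 * (\<Sum>k\<in>{1..m - 1}. c k)"
proof -
  have split: "{-m<..<m} = uminus ` {1..m - 1} \<union> ({0} \<union> {1..m - 1})"
    using assms(2) by (auto intro!: image_eqI[where x="- _"])
  have neg: "(\<Sum>k\<in>uminus ` {1..m - 1}. c k) = (\<Sum>k\<in>{1..m - 1}. c k)"
    by (subst sum.reindex) (auto simp: inj_on_def assms(1))
  have "(\<Sum>k\<in>{-m<..<m}. c k) = (\<Sum>k\<in>uminus ` {1..m - 1}. c k) + (\<Sum>k\<in>{0} \<union> {1..m - 1}. c k)"
    unfolding split by (rule sum.union_disjoint) auto
  also have "\<dots> = c 0 + 2 * (\<Sum>k\<in>{1..m - 1}. c k)"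
    unfolding neg by (subst sum.union_disjoint) (auto simp: mult_2 algebra_simps)
  finally show ?thesis .
qed

section \<open>Van der Corput's inequality\<close>

definition correlation :: "(int \<Rightarrow> complex) \<Rightarrow> int \<Rightarrow> int \<Rightarrow> int \<Rightarrow> complex" where
  "correlation z L U k = (\<Sum>n\<in>{L<..U}. z (n + k) * cnj (z n))"

context
  fixes z :: "int \<Rightarrow> complex" and L U :: int
  assumes support: "\<And>n. n \<notin> {L<..U} \<Longrightarrow> z n = 0"
begin

lemma sum_windows:
  "(\<Sum>m\<in>{L - int H + 1<..U}. \<Sum>h<H. z (m + int h)) = of_nat H * (\<Sum>n\<in>{L<..U}. z n)"
proof -
  have "(\<Sum>m\<in>{L - int H + 1<..U}. z (m + int h)) = (\<Sum>n\<in>{L<..U}. z n)" if "h < H" for h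
  proof -
    have "(\<Sum>m\<in>{L - int H + 1<..U}. z (m + int h)) = (\<Sum>n\<in>{L - int H + 1 + int h<..U + int h}. z n)"
      by (rule sum_greaterThanAtMost_int_shift)
    also have "\<dots> = (\<Sum>n\<in>{L<..U}. z n)"
      using that by (intro sum_greaterThanAtMost_support[OF support]) auto
    finally show ?thesis .
  qed
  then show ?thesis
    by (subst sum.swap) simp
qed

lemma sum_window_products:
  assumes "h' < H"
  shows "(\<Sum>m\<in>{L - int H + 1<..U}. z (m + int h) * cnj (z (m + int h'))) =
    correlation z L U (int h - int h')"
proof -
  define g where "g n = z (n + (int h - int h')) * cnj (z n)" for n
  have "(\<Sum>m\<in>{L - int H + 1<..U}. z (m + int h) * cnj (z (m + int h'))) =
      (\<Sum>m\<in>{L - int H + 1<..U}. g (m + int h'))"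
    unfolding g_def by (simp add: algebra_simps)
  also have "\<dots> = (\<Sum>n\<in>{L - int H + 1 + int h'<..U + int h'}. g n)"
    by (rule sum_greaterThanAtMost_int_shift)
  also have "\<dots> = (\<Sum>n\<in>{L<..U}. g n)"
    using assms by (intro sum_greaterThanAtMost_support) (auto simp: g_def support)
  finally show ?thesis
    unfolding correlation_def g_def .
qed

lemma sum_norm_windows_squared_le:
  "(\<Sum>m\<in>{L - int H + 1<..U}. (cmod (\<Sum>h<H. z (m + int h)))\<^sup>2)
     \<le> (\<Sum>h<H. \<Sum>h'<H. cmod (correlation z L U (int h - int h')))"
proof -
  let ?M = "{L - int H + 1<..U}"
  have "complex_of_real (\<Sum>m\<in>?M. (cmod (\<Sum>h<H. z (m + int h)))\<^sup>2)
      = (\<Sum>m\<in>?M. \<Sum>h<H. \<Sum>h'<H. z (m + int h) * cnj (z (m + int h')))"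
    by (simp add: complex_norm_square sum_product del: of_real_power)
  also have "\<dots> = (\<Sum>h<H. \<Sum>h'<H. \<Sum>m\<in>?M. z (m + int h) * cnj (z (m + int h')))"
    by (subst sum.swap) (simp add: sum.swap[of _ ?M])
  also have "\<dots> = (\<Sum>h<H. \<Sum>h'<H. correlation z L U (int h - int h'))"
    by (simp add: sum_window_products)
  finally have "(\<Sum>m\<in>?M. (cmod (\<Sum>h<H. z (m + int h)))\<^sup>2)
      = cmod (\<Sum>h<H. \<Sum>h'<H. correlation z L U (int h - int h'))"
    by (metis (no_types, lifting) norm_of_real abs_of_nonneg sum_nonneg zero_le_power2)
  also have "\<dots> \<le> (\<Sum>h<H. cmod (\<Sum>h'<H. correlation z L U (int h - int h')))"
    by (rule norm_sum)
  also have "\<dots> \<le> (\<Sum>h<H. \<Sum>h'<H. cmod (correlation z L U (int h - int h')))"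
    by (intro sum_mono norm_sum)
  finally show ?thesis .
qed

lemma correlation_uminus: "correlation z L U (- k) = cnj (correlation z L U k)"
proof -
  define g where "g m = z m * cnj (z (m + k))" for m
  have g_outside: "g m = 0" if "m \<notin> {L<..U}" for m
    using that by (simp add: g_def support)
  have g_outside_shifted: "g m = 0" if "m \<notin> {L + - k<..U + - k}" for m
    using that support[of "m + k"] by (auto simp: g_def)
  have "correlation z L U (- k) = (\<Sum>n\<in>{L<..U}. g (n + - k))"
    unfolding correlation_def g_def by simp
  also have "\<dots> = (\<Sum>m\<in>{L + - k<..U + - k}. g m)"
    by (rule sum_greaterThanAtMost_int_shift)
  also have "\<dots> = (\<Sum>m\<in>{min L (L + - k)<..max U (U + - k)}. g m)"
    by (rule sum_greaterThanAtMost_support[OF g_outside_shifted, symmetric]) auto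
  also have "\<dots> = (\<Sum>m\<in>{L<..U}. g m)"
    by (rule sum_greaterThanAtMost_support[OF g_outside]) auto
  finally show ?thesis
    unfolding correlation_def g_def by (simp add: mult.commute)
qed

lemma norm_correlation_0_le:
  assumes "L \<le> U" and "\<And>n. cmod (z n) \<le> 1"
  shows "cmod (correlation z L U 0) \<le> of_int (U - L)"
proof -
  have "cmod (correlation z L U 0) \<le> (\<Sum>n\<in>{L<..U}. cmod (z n * cnj (z n)))"
    unfolding correlation_def by simp (rule norm_sum)
  also have "\<dots> \<le> (\<Sum>n\<in>{L<..U}. 1)"
    using assms(2) by (intro sum_mono) (simp add: norm_mult mult_le_one)
  finally show ?thesis
    using assms(1) by simp
qed

theorem van_der_corput_int:
  assumes "H \<ge> 1" and "L \<le> U" and "\<And>n. cmod (z n) \<le> 1"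
  shows "(cmod (\<Sum>n\<in>{L<..U}. z n))\<^sup>2 \<le> (of_int (U - L) + real H - 1) / real H *
    (of_int (U - L) + 2 * (\<Sum>k\<in>{1..int H - 1}. cmod (correlation z L U k)))"
proof -
  let ?M = "{L - int H + 1<..U}"
  let ?S = "\<Sum>n\<in>{L<..U}. z n"
  let ?C = "\<Sum>k\<in>{1..int H - 1}. cmod (correlation z L U k)"
  have card: "real (card ?M) = of_int (U - L) + real H - 1"
    using assms(1,2) by simp
  have "(real H)\<^sup>2 * (cmod ?S)\<^sup>2 = (cmod (\<Sum>m\<in>?M. \<Sum>h<H. z (m + int h)))\<^sup>2"
    by (simp add: sum_windows norm_mult power_mult_distrib)
  also have "\<dots> \<le> card ?M * (\<Sum>m\<in>?M. (cmod (\<Sum>h<H. z (m + int h)))\<^sup>2)"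
    by (rule norm_sum_squared_le)
  also have "\<dots> \<le> card ?M * (H * (\<Sum>k\<in>{-int H<..<int H}. cmod (correlation z L U k)))"
    by (intro mult_left_mono order_trans[OF sum_norm_windows_squared_le sum_pair_differences_le]) simp_all
  also have "\<dots> = card ?M * (H * (cmod (correlation z L U 0) + 2 * ?C))"
    using assms(1) by (subst sum_symmetric_int_interval) (auto simp: correlation_uminus)
  also have "\<dots> \<le> card ?M * (H * (of_int (U - L) + 2 * ?C))"
    using norm_correlation_0_le[OF assms(2,3)] by (intro mult_left_mono) auto
  finally have "real H * (real H * (cmod ?S)\<^sup>2) \<le> real H * (card ?M * (of_int (U - L) + 2 * ?C))"
    by (simp add: power2_eq_square algebra_simps)
  then have "real H * (cmod ?S)\<^sup>2 \<le> card ?M * (of_int (U - L) + 2 * ?C)"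
    using assms(1) by simp
  then show ?thesis
    using assms(1) unfolding card by (simp add: field_simps)
qed

end

lemma norm_e [simp]: "cmod (e x) = 1"
proof -
  have "e x = exp (\<i> * complex_of_real (2 * pi * x))"
    unfolding e_def by (simp add: algebra_simps)
  then show ?thesis by simp
qed

lemma e_mult_cnj: "e a * cnj (e b) = e (a - b)"
  unfolding e_def by (simp add: exp_cnj exp_add[symmetric] algebra_simps)

lemma int_interval_eq_floor:
  "{n::int. x < of_int n \<and> of_int n \<le> y} = {\<lfloor>x\<rfloor><..\<lfloor>y\<rfloor>}"
  by (auto simp: floor_less_iff le_floor_iff)

theorem van_der_corput:
  fixes g :: "real \<Rightarrow> real"
  assumes "H \<ge> 1" and "real H \<le> Y"
  shows "(cmod (\<Sum>n\<in>{n::int. X < of_int n \<and> of_int n \<le> X + Y}. e (g n)))\<^sup>2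
     \<le> 4 * Y\<^sup>2 / H + 4 * Y / H * (\<Sum>k\<in>{1..int H - 1}.
        cmod (\<Sum>n\<in>{n::int. X < of_int n \<and> of_int n \<le> X + Y - of_int k}. e (g (n + k) - g n)))"
proof -
  define L where "L = \<lfloor>X\<rfloor>"
  define U where "U = \<lfloor>X + Y\<rfloor>"
  define z where "z n = (if n \<in> {L<..U} then e (g n) else 0)" for n
  define C where "C = (\<Sum>k\<in>{1..int H - 1}.
    cmod (\<Sum>n\<in>{n::int. X < of_int n \<and> of_int n \<le> X + Y - of_int k}. e (g (n + k) - g n)))"
  have LU: "L \<le> U"
    unfolding L_def U_def using assms(2) by (intro floor_mono) simp
  have "correlation z L U k = (\<Sum>n\<in>{n::int. X < of_int n \<and> of_int n \<le> X + Y - of_int k}.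
      e (g (n + k) - g n))" if "k \<ge> 1" for k
  proof -
    have "\<lfloor>X + Y - of_int k\<rfloor> = U - k"
      unfolding U_def by linarith
    then have "{n::int. X < of_int n \<and> of_int n \<le> X + Y - of_int k} = {L<..U - k}"
      by (simp add: int_interval_eq_floor L_def)
    moreover have "correlation z L U k = (\<Sum>n\<in>{L<..U - k}. z (n + k) * cnj (z n))"
      unfolding correlation_def using that
      by (intro sum.mono_neutral_right) (auto simp: z_def)
    ultimately show ?thesis
      using that by (auto simp: z_def e_mult_cnj intro: sum.cong)
  qed
  then have C: "(\<Sum>k\<in>{1..int H - 1}. cmod (correlation z L U k)) = C"
    unfolding C_def by (intro sum.cong) auto
  have "C \<ge> 0"
    unfolding C_def by (intro sum_nonneg) simp
  have "of_int (U - L) \<le> Y + 1"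
    unfolding U_def L_def by linarith
  have "(cmod (\<Sum>n\<in>{n::int. X < of_int n \<and> of_int n \<le> X + Y}. e (g n)))\<^sup>2 = (cmod (\<Sum>n\<in>{L<..U}. z n))\<^sup>2"
    by (simp add: int_interval_eq_floor L_def U_def z_def)
  also have "\<dots> \<le> (of_int (U - L) + real H - 1) / real H * (of_int (U - L) + 2 * C)"
  proof -
    have "z n = 0" if "n \<notin> {L<..U}" for n
      using that by (auto simp: z_def)
    moreover have "cmod (z n) \<le> 1" for n
      by (simp add: z_def)
    ultimately show ?thesis
      using van_der_corput_int[of L U z H] assms(1) LU unfolding C by blast
  qed
  also have "\<dots> \<le> (2 * Y) / real H * (2 * Y + 2 * C)"
    using \<open>of_int (U - L) \<le> Y + 1\<close> \<open>C \<ge> 0\<close> LU assms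
    by (intro mult_mono divide_right_mono) auto
  also have "\<dots> = 4 * Y\<^sup>2 / H + 4 * Y / H * C"
    by (simp add: field_simps power2_eq_square add_divide_distrib)
  finally show ?thesis
    unfolding C_def .
qed

section \<open>Iterated Weyl differencing\<close>

lemma fdiff_cong: "(\<And>i. i \<in> {1..h} \<Longrightarrow> a i = b i) \<Longrightarrow> fdiff f a h x = fdiff f b h x"
  by (induction h arbitrary: x) auto

definition weyl_sum :: "(real \<Rightarrow> real) \<Rightarrow> real \<Rightarrow> real \<Rightarrow> nat \<Rightarrow> (nat \<Rightarrow> int) \<Rightarrow> complex" where
  "weyl_sum f X Y k a = (\<Sum>n\<in>Iset X Y k a. e (fdiff f a k (of_int n)))"

definition shifts :: "(nat \<Rightarrow> nat) \<Rightarrow> nat \<Rightarrow> (nat \<Rightarrow> int) set" where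
  "shifts H k = Pi\<^sub>E {1..k} (\<lambda>r. {1..int (H r) - 1})"

definition weyl_average :: "(real \<Rightarrow> real) \<Rightarrow> real \<Rightarrow> real \<Rightarrow> (nat \<Rightarrow> nat) \<Rightarrow> nat \<Rightarrow> real" where
  "weyl_average f X Y H k =
     (\<Sum>a\<in>shifts H k. cmod (weyl_sum f X Y k a)) / (Y * (\<Prod>r\<in>{1..k}. real (H r)))"

lemma weyl_sum_extend:
  "weyl_sum f X Y (Suc j) (a(Suc j := b)) =
    (\<Sum>n\<in>{n::int. X < of_int n \<and> of_int n \<le> X + (Y - of_int (\<Sum>i\<in>{1..j}. a i)) - of_int b}.
       e (fdiff f a j (n + b) - fdiff f a j n))"
proof -
  have "fdiff f (a(Suc j := b)) j y = fdiff f a j y" for y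
    by (rule fdiff_cong) auto
  then show ?thesis
    unfolding weyl_sum_def Iset_def by (simp add: algebra_simps)
qed

lemma card_shifts_le: "real (card (shifts H k)) \<le> (\<Prod>r\<in>{1..k}. real (H r))"
proof -
  have "card (shifts H k) = (\<Prod>r\<in>{1..k}. card {1..int (H r) - 1})"
    unfolding shifts_def by (rule card_PiE) simp
  then show ?thesis
    by simp (intro prod_mono; simp)
qed

lemma sum_shifts_Suc:
  "(\<Sum>a\<in>shifts H (Suc j). g a) = (\<Sum>a\<in>shifts H j. \<Sum>b\<in>{1..int (H (Suc j)) - 1}. g (a(Suc j := b)))"
proof -
  let ?B = "{1..int (H (Suc j)) - 1}"
  have image: "shifts H (Suc j) = (\<lambda>(b, a). a(Suc j := b)) ` (?B \<times> shifts H j)"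
    unfolding shifts_def by (simp add: atLeastAtMostSuc_conv PiE_insert_eq)
  have inj: "inj_on (\<lambda>(b, a). a(Suc j := b)) (?B \<times> shifts H j)"
    unfolding shifts_def using inj_combinator[of "Suc j" "{1..j}" "\<lambda>r. {1..int (H r) - 1}"] by simp
  have "(\<Sum>a\<in>shifts H (Suc j). g a) = (\<Sum>p\<in>?B \<times> shifts H j. g ((\<lambda>(b, a). a(Suc j := b)) p))"
    unfolding image by (rule sum.reindex[OF inj, unfolded comp_def])
  also have "\<dots> = (\<Sum>b\<in>?B. \<Sum>a\<in>shifts H j. g (a(Suc j := b)))"
    unfolding sum.cartesian_product by (simp add: case_prod_beta)
  finally have "(\<Sum>a\<in>shifts H (Suc j). g a) = (\<Sum>b\<in>?B. \<Sum>a\<in>shifts H j. g (a(Suc j := b)))" .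
  then show ?thesis
    by (subst sum.swap) simp
qed

lemma norm_weyl_sum_squared_le:
  assumes a: "a \<in> shifts H j" and "H (Suc j) \<ge> 1" and HY: "real (\<Sum>r\<in>{1..Suc j}. H r) \<le> Y"
  shows "(cmod (weyl_sum f X Y j a))\<^sup>2 \<le> 4 * Y\<^sup>2 / H (Suc j) + 4 * Y / H (Suc j) *
    (\<Sum>b\<in>{1..int (H (Suc j)) - 1}. cmod (weyl_sum f X Y (Suc j) (a(Suc j := b))))"
    (is "_ \<le> _ + _ * ?R")
proof -
  define Ya where "Ya = Y - of_int (\<Sum>i\<in>{1..j}. a i)"
  have a_bounds: "1 \<le> a i" "a i \<le> int (H i) - 1" if "i \<in> {1..j}" for i
    using a that unfolding shifts_def by auto
  have "0 \<le> (\<Sum>i\<in>{1..j}. a i)"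
    using a_bounds by (intro sum_nonneg) force
  then have "Ya \<le> Y"
    unfolding Ya_def by linarith
  have "(\<Sum>i\<in>{1..j}. a i) \<le> (\<Sum>i\<in>{1..j}. int (H i))"
    using a_bounds by (intro sum_mono) force
  then have "of_int (\<Sum>i\<in>{1..j}. a i) \<le> real (\<Sum>i\<in>{1..j}. H i)"
    by (metis of_int_le_iff of_int_of_nat_eq of_nat_sum)
  then have "real (H (Suc j)) \<le> Ya"
    using HY unfolding Ya_def by simp
  moreover have "weyl_sum f X Y j a = (\<Sum>n\<in>{n::int. X < of_int n \<and> of_int n \<le> X + Ya}. e (fdiff f a j n))"
    unfolding weyl_sum_def Iset_def Ya_def by (simp add: algebra_simps)
  ultimately have "(cmod (weyl_sum f X Y j a))\<^sup>2 \<le> 4 * Ya\<^sup>2 / H (Suc j) + 4 * Ya / H (Suc j) * ?R"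
    using van_der_corput[of "H (Suc j)" Ya "fdiff f a j" X] assms(2)
    unfolding weyl_sum_extend Ya_def[symmetric] by simp
  also have "\<dots> \<le> 4 * Y\<^sup>2 / H (Suc j) + 4 * Y / H (Suc j) * ?R"
    using \<open>Ya \<le> Y\<close> \<open>real (H (Suc j)) \<le> Ya\<close>
    by (intro add_mono mult_right_mono divide_right_mono mult_left_mono power_mono sum_nonneg) auto
  finally show ?thesis .
qed

lemma sum_norm_weyl_sum_squared_le:
  assumes H: "\<And>r. r \<in> {1..Suc j} \<Longrightarrow> H r \<ge> 1" and HY: "real (\<Sum>r\<in>{1..Suc j}. H r) \<le> Y"
  defines "P \<equiv> \<Prod>r\<in>{1..j}. real (H r)"
  shows "(\<Sum>a\<in>shifts H j. cmod (weyl_sum f X Y j a))\<^sup>2 \<le>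
    P\<^sup>2 * (4 * Y\<^sup>2 / H (Suc j)) + P * (4 * Y / H (Suc j)) *
      (\<Sum>a\<in>shifts H (Suc j). cmod (weyl_sum f X Y (Suc j) a))"
proof -
  let ?Q = "shifts H j"
  let ?D = "\<Sum>a\<in>shifts H (Suc j). cmod (weyl_sum f X Y (Suc j) a)"
  have "Y > 0"
    using H[of "Suc j"] HY sum_nonneg[of "{1..j}" "\<lambda>r. real (H r)"] by simp
  have "card ?Q \<le> P"
    unfolding P_def by (rule card_shifts_le)
  have "(\<Sum>a\<in>?Q. cmod (weyl_sum f X Y j a))\<^sup>2 \<le> card ?Q * (\<Sum>a\<in>?Q. (cmod (weyl_sum f X Y j a))\<^sup>2)"
    using sum_squared_le_sum_of_squares by (simp add: mult.commute)
  also have "\<dots> \<le> card ?Q * (\<Sum>a\<in>?Q. 4 * Y\<^sup>2 / H (Suc j) + 4 * Y / H (Suc j) *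
      (\<Sum>b\<in>{1..int (H (Suc j)) - 1}. cmod (weyl_sum f X Y (Suc j) (a(Suc j := b)))))"
    using H HY by (intro mult_left_mono sum_mono norm_weyl_sum_squared_le) auto
  also have "\<dots> = card ?Q * (card ?Q * (4 * Y\<^sup>2 / H (Suc j)) + 4 * Y / H (Suc j) * ?D)"
    by (simp add: sum.distrib sum_distrib_left sum_shifts_Suc)
  also have "\<dots> \<le> P * (P * (4 * Y\<^sup>2 / H (Suc j)) + 4 * Y / H (Suc j) * ?D)"
    using \<open>card ?Q \<le> P\<close> \<open>Y > 0\<close>
    by (intro mult_mono add_mono mult_right_mono) (auto intro!: add_nonneg_nonneg sum_nonneg divide_nonneg_nonneg mult_nonneg_nonneg)
  finally show ?thesis
    by (simp add: power2_eq_square algebra_simps)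
qed

lemma weyl_average_step:
  assumes "j < d" and H: "\<And>r. r \<in> {1..d} \<Longrightarrow> H r \<ge> 1" and HY: "real (\<Sum>r\<in>{1..d}. H r) \<le> Y"
  shows "(weyl_average f X Y H j)\<^sup>2 \<le> 4 / H (Suc j) + 4 * weyl_average f X Y H (Suc j)"
proof -
  have H_Suc: "H r \<ge> 1" if "r \<in> {1..Suc j}" for r
    using that \<open>j < d\<close> by (intro H) auto
  have "real (\<Sum>r\<in>{1..Suc j}. H r) \<le> real (\<Sum>r\<in>{1..d}. H r)"
    using \<open>j < d\<close> by (intro of_nat_mono sum_mono2) auto
  with HY have HY_Suc: "real (\<Sum>r\<in>{1..Suc j}. H r) \<le> Y"
    by linarith
  define P where "P = (\<Prod>r\<in>{1..j}. real (H r))"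
  define D where "D = (\<Sum>a\<in>shifts H (Suc j). cmod (weyl_sum f X Y (Suc j) a))"
  have "Y > 0"
    using H_Suc[of "Suc j"] HY_Suc sum_nonneg[of "{1..j}" "\<lambda>r. real (H r)"] by simp
  have "P > 0"
    unfolding P_def using H_Suc by (intro prod_pos) force
  have "real (H (Suc j)) > 0"
    using H_Suc[of "Suc j"] by simp
  have "(weyl_average f X Y H j)\<^sup>2 = (\<Sum>a\<in>shifts H j. cmod (weyl_sum f X Y j a))\<^sup>2 / (Y * P)\<^sup>2"
    unfolding weyl_average_def P_def by (simp add: power_divide)
  also have "\<dots> \<le> (P\<^sup>2 * (4 * Y\<^sup>2 / H (Suc j)) + P * (4 * Y / H (Suc j)) * D) / (Y * P)\<^sup>2"
    using sum_norm_weyl_sum_squared_le[OF H_Suc HY_Suc, of f X] unfolding P_def D_def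
    by (intro divide_right_mono) auto
  also have "\<dots> = 4 / H (Suc j) + 4 * (D / (Y * (P * H (Suc j))))"
    using \<open>Y > 0\<close> \<open>P > 0\<close> \<open>real (H (Suc j)) > 0\<close> by (simp add: field_simps power2_eq_square)
  also have "D / (Y * (P * H (Suc j))) = weyl_average f X Y H (Suc j)"
    unfolding weyl_average_def D_def P_def by simp
  finally show ?thesis .
qed

lemma weyl_average_0:
  "Y \<ge> 0 \<Longrightarrow> weyl_average f X Y H 0 = cmod ((1 / Y) * (\<Sum>n\<in>{n::int. X < of_int n \<and> of_int n \<le> X + Y}. e (f n)))"
  unfolding weyl_average_def weyl_sum_def shifts_def Iset_def by (simp add: norm_divide)

lemma Td_eq_weyl_average: "Td f X Y d H = weyl_average f X Y H d"
  unfolding Td_def weyl_average_def weyl_sum_def shifts_def by simp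

lemma weyl_average_nonneg: "Y \<ge> 0 \<Longrightarrow> weyl_average f X Y H k \<ge> 0"
  unfolding weyl_average_def by (intro divide_nonneg_nonneg sum_nonneg mult_nonneg_nonneg prod_nonneg) auto

lemma downward_iteration_bound:
  fixes A \<eta> :: "nat \<Rightarrow> real"
  assumes B: "B\<^sup>2 = 4 + 4 * B" "B > 0" and "M \<ge> 0"
    and step: "\<And>j. j < d \<Longrightarrow> (A j)\<^sup>2 \<le> 4 * \<eta> (Suc j) + 4 * A (Suc j)"
    and \<eta>: "\<And>r. r \<in> {1..d} \<Longrightarrow> \<eta> r \<le> M ^ 2 ^ r"
    and top: "A d \<le> B * M ^ 2 ^ d"
  shows "A 0 \<le> B * M"
proof -
  have "A j \<le> B * M ^ 2 ^ j" if "j \<le> d" for j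
    using that
  proof (induction j rule: inc_induct)
    case base
    then show ?case by (rule top)
  next
    case (step j)
    have "(A j)\<^sup>2 \<le> 4 * \<eta> (Suc j) + 4 * A (Suc j)"
      using step.hyps by (intro assms(4)) simp
    also have "\<dots> \<le> 4 * M ^ 2 ^ Suc j + 4 * (B * M ^ 2 ^ Suc j)"
      using \<eta>[of "Suc j"] step.hyps step.IH by simp
    also have "\<dots> = B\<^sup>2 * (M ^ 2 ^ j)\<^sup>2"
      unfolding B(1) power_mult[symmetric] by (simp add: algebra_simps)
    also have "\<dots> = (B * M ^ 2 ^ j)\<^sup>2"
      by (simp only: power_mult_distrib)
    finally show ?case
      by (rule power2_le_imp_le) (use B(2) \<open>M \<ge> 0\<close> in simp)
  qed
  from this[of 0] show ?thesis by simp
qed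

lemma powr_le_imp_le_power:
  fixes x M c :: real
  assumes "x \<ge> 0" and "n > 0" and "x powr (c / real n) \<le> M"
  shows "x powr c \<le> M ^ n"
proof -
  have "M \<ge> 0"
    using assms(3) by (meson order_trans powr_ge_zero)
  have "(x powr (c / real n)) ^ n \<le> M ^ n"
    using assms(3) by (intro power_mono) auto
  then show ?thesis
    using assms(1,2) \<open>M \<ge> 0\<close> by (cases "x = 0") (auto simp: powr_power)
qed

lemma powr_root_mult_le_imp_le:
  fixes A B M :: real
  assumes "A \<ge> 0" and "B > 0" and "n > 0" and "B powr (- 1 / real n) * A powr (1 / real n) \<le> M"
  shows "A \<le> B * M ^ n"
proof -
  have "B powr (- 1 / real n) * A powr (1 / real n) = (A / B) powr (1 / real n)"
    using assms(1,2) by (simp add: powr_divide powr_minus_divide)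
  then have "(A / B) powr 1 \<le> M ^ n"
    using assms by (intro powr_le_imp_le_power) auto
  then show ?thesis
    using assms(1,2) by (simp add: pos_divide_le_eq mult.commute)
qed

lemma Bconst_pos: "Bconst > 0"
  unfolding Bconst_def by (simp add: add_pos_nonneg)

lemma Bconst_squared: "Bconst\<^sup>2 = 4 + 4 * Bconst"
  unfolding Bconst_def by (simp add: power2_eq_square algebra_simps)

theorem theorem7:
  fixes X Y :: real and f :: "real \<Rightarrow> real" and d :: nat and H :: "nat \<Rightarrow> nat"
  assumes "Y > 0"
    and "d \<ge> 1"
    and "\<And>r. r \<in> {1..d} \<Longrightarrow> H r \<ge> 1"
    and "real (\<Sum>r\<in>{1..d}. H r) \<le> Y"
  shows "cmod ((1 / Y) * (\<Sum>n\<in>{n::int. X < of_int n \<and> of_int n \<le> X + Y}. e (f (of_int n))))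
           \<le> Bconst * Max ((\<lambda>r. real (H r) powr (- 1 / 2 ^ r)) ` {1..d}
                      \<union> {Bconst powr (- 1 / 2 ^ d) * Td f X Y d H powr (1 / 2 ^ d)})"
proof -
  let ?A = "weyl_average f X Y H"
  define M where "M = Max ((\<lambda>r. real (H r) powr (- 1 / 2 ^ r)) ` {1..d}
                      \<union> {Bconst powr (- 1 / 2 ^ d) * Td f X Y d H powr (1 / 2 ^ d)})"
  have H_powr_le: "real (H r) powr (- 1 / 2 ^ r) \<le> M" if "r \<in> {1..d}" for r
    unfolding M_def using that by (intro Max_ge) auto
  then have "M \<ge> 0"
    using assms(2) by (intro order_trans[OF powr_ge_zero H_powr_le]) auto
  have H_le: "1 / real (H r) \<le> M ^ 2 ^ r" if "r \<in> {1..d}" for r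
    using powr_le_imp_le_power[of "real (H r)" "2 ^ r" "- 1" M] H_powr_le[OF that]
    by (simp add: powr_minus_divide)
  have "Bconst powr (- 1 / 2 ^ d) * ?A d powr (1 / 2 ^ d) \<le> M"
    unfolding M_def Td_eq_weyl_average[symmetric] by (intro Max_ge) auto
  then have top: "?A d \<le> Bconst * M ^ 2 ^ d"
    using powr_root_mult_le_imp_le[of "?A d" Bconst "2 ^ d" M] weyl_average_nonneg[of Y] assms(1) Bconst_pos
    by simp
  have step: "(?A j)\<^sup>2 \<le> 4 * (1 / H (Suc j)) + 4 * ?A (Suc j)" if "j < d" for j
    using weyl_average_step[OF that assms(3,4)] by simp
  have "?A 0 \<le> Bconst * M"
    by (rule downward_iteration_bound[where A = ?A and \<eta> = "\<lambda>r. 1 / real (H r)",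
          OF Bconst_squared Bconst_pos \<open>M \<ge> 0\<close> step H_le top])
  then show ?thesis
    using assms(1) by (simp add: weyl_average_0 M_def)
qed

end
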